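(* Let $d,k\in\mathbb N^+$ and let $G=(V,E)$ be a graph. If $|V^G_{[1,d]}|>(d+1)(k-1)^2$, then $G$ has a $k$-edge induced subgraph.
   Context: All graphs are simple (finite, nonempty vertex set, undirected, no loops or multiple edges). $V^G_{[1,d]}:=\{v\in V: 1\le \deg(v)\le d\}$. A $k$-edge induced subgraph of $G$ is an induced subgraph $G[S]$ ($S\neq\emptyset$) with exactly $k$ edges. *)

theory Defs
  imports Main
begin

definition simple_graph :: "'a set \<Rightarrow> 'a set set \<Rightarrow> bool" where
  "simple_graph V E \<longleftrightarrow> finite V \<and> V \<noteq> {} \<and> (\<forall>e\<in>E. e \<subseteq> V \<and> card e = 2)"

definition degree :: "'a set set \<Rightarrow> 'a \<Rightarrow> nat" where
  "degree E v = card {e \<in> E. v \<in> e}"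

definition deg_range_verts :: "'a set \<Rightarrow> 'a set set \<Rightarrow> nat \<Rightarrow> 'a set" where
  "deg_range_verts V E d = {v \<in> V. 1 \<le> degree E v \<and> degree E v \<le> d}"

definition induced_edges :: "'a set set \<Rightarrow> 'a set \<Rightarrow> 'a set set" where
  "induced_edges E S = {e \<in> E. e \<subseteq> S}"

definition has_k_edge_induced_subgraph :: "'a set \<Rightarrow> 'a set set \<Rightarrow> nat \<Rightarrow> bool" where
  "has_k_edge_induced_subgraph V E k \<longleftrightarrow>
     (\<exists>S. S \<subseteq> V \<and> S \<noteq> {} \<and> card (induced_edges E S) = k)"

end

theory Submission
  imports Defs
begin

text \<open>
  The vertices \<open>W\<close> of degree in \<open>[1, d]\<close> induce a graph of maximum degree \<open>d\<close>, so a greedy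
  argument yields an independent set \<open>T \<subseteq> W\<close> with \<open>|T| > (k - 1)\<^sup>2\<close>, all of whose vertices
  have a neighbour.  If some vertex \<open>u\<close> has \<open>k\<close> neighbours in \<open>T\<close>, then \<open>u\<close> with \<open>k\<close> of them
  induces a star with \<open>k\<close> edges.  Otherwise take a minimal set \<open>U\<close> dominating \<open>T\<close>; double
  counting gives \<open>|U| \<ge> k\<close>, and minimality gives each \<open>u \<in> U\<close> a private neighbour \<open>p u \<in> T\<close>.
  Choose \<open>C \<subseteq> U\<close> inducing \<open>m \<le> k\<close> edges with \<open>m + |C| \<ge> k\<close>, and add the private neighbours
  of \<open>k - m\<close> vertices of \<open>C\<close>: each contributes exactly one pendant edge.
\<close>

definition nbr :: "'a set set \<Rightarrow> 'a \<Rightarrow> 'a set" where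
  "nbr E x = {y. {x, y} \<in> E}"

definition independent :: "'a set set \<Rightarrow> 'a set \<Rightarrow> bool" where
  "independent E I \<longleftrightarrow> (\<forall>x\<in>I. \<forall>y\<in>I. x \<noteq> y \<longrightarrow> {x, y} \<notin> E)"

lemma nbr_sym: "y \<in> nbr E x \<longleftrightarrow> x \<in> nbr E y"
  by (simp add: nbr_def insert_commute)

lemma simple_graph_edgeE:
  assumes "simple_graph V E" "e \<in> E"
  obtains a b where "e = {a, b}" "a \<noteq> b" "a \<in> V" "b \<in> V"
  using assms unfolding simple_graph_def by (metis card_2_iff insert_subset)

lemma simple_graph_finite_edges: "simple_graph V E \<Longrightarrow> finite E"
  unfolding simple_graph_def by (meson Pow_iff finite_Pow_iff rev_finite_subset subsetI)

lemma simple_graph_no_loop: "simple_graph V E \<Longrightarrow> {x} \<notin> E"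
  unfolding simple_graph_def by fastforce

lemma simple_graph_nbr_subset: "simple_graph V E \<Longrightarrow> nbr E x \<subseteq> V"
  unfolding simple_graph_def nbr_def by auto

lemma card_nbr_le_degree:
  assumes "finite E"
  shows "card (nbr E x) \<le> degree E x"
  unfolding degree_def
  by (rule card_inj_on_le[where f = "\<lambda>y. {x, y}"])
     (use assms in \<open>auto simp: inj_on_def doubleton_eq_iff nbr_def\<close>)

lemma card_nbr_inter_le_degree:
  assumes "simple_graph V E"
  shows "card (nbr E x \<inter> A) \<le> degree E x"
proof -
  have "finite (nbr E x)"
    using finite_subset[OF simple_graph_nbr_subset[OF assms]] assms by (simp add: simple_graph_def)
  then have "card (nbr E x \<inter> A) \<le> card (nbr E x)" by (simp add: card_mono)
  also have "\<dots> \<le> degree E x" using card_nbr_le_degree simple_graph_finite_edges[OF assms] .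
  finally show ?thesis .
qed

lemma simple_graph_nbr_nonempty:
  assumes "simple_graph V E" "1 \<le> degree E v"
  shows "nbr E v \<noteq> {}"
proof -
  have "{e \<in> E. v \<in> e} \<noteq> {}"
    using assms(2) unfolding degree_def by (metis card.empty not_one_le_zero)
  then obtain e where "e \<in> E" "v \<in> e" by auto
  then show ?thesis
    using simple_graph_edgeE[OF assms(1)] by (metis empty_iff insertE insert_commute nbr_def mem_Collect_eq)
qed

lemma simple_graph_induced_edges_empty: "simple_graph V E \<Longrightarrow> induced_edges E {} = {}"
  unfolding simple_graph_def induced_edges_def by fastforce

lemma has_k_edge_induced_subgraphI:
  assumes "simple_graph V E" "S \<subseteq> V" "card (induced_edges E S) = k" "k \<ge> 1"
  shows "has_k_edge_induced_subgraph V E k"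
proof -
  have "S \<noteq> {}" using assms(3,4) simple_graph_induced_edges_empty[OF assms(1)] by auto
  then show ?thesis using assms(2,3) unfolding has_k_edge_induced_subgraph_def by blast
qed

text \<open>Pick a vertex,
  delete it together with its neighbours (at most \<open>d + 1\<close> vertices) and recurse.\<close>

lemma independent_insert:
  assumes "independent E I" "\<forall>y\<in>I. {x, y} \<notin> E"
  shows "independent E (insert x I)"
  using assms unfolding independent_def by (metis insert_commute insert_iff)

lemma greedy_independent_set:
  assumes "finite A" "\<forall>x\<in>A. card (nbr E x \<inter> A) \<le> d"
  shows "\<exists>I\<subseteq>A. independent E I \<and> card A \<le> (d + 1) * card I"
  using assms
proof (induction "card A" arbitrary: A rule: less_induct)
  case less
  show ?case
  proof (cases "A = {}")
    case True
    then show ?thesis by (auto simp: independent_def)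
  next
    case False
    then obtain x where x: "x \<in> A" by auto
    define A' where "A' = A - insert x (nbr E x)"
    have "A' \<subset> A" using x by (auto simp: A'_def)
    then have smaller: "card A' < card A" and fin': "finite A'"
      using less.prems(1) by (auto simp: psubset_card_mono finite_subset)
    have deg': "\<forall>y\<in>A'. card (nbr E y \<inter> A') \<le> d"
    proof
      fix y assume "y \<in> A'"
      then have "card (nbr E y \<inter> A') \<le> card (nbr E y \<inter> A)" "card (nbr E y \<inter> A) \<le> d"
        using less.prems by (auto simp: A'_def intro: card_mono)
      then show "card (nbr E y \<inter> A') \<le> d" by linarith
    qed
    obtain I' where I': "I' \<subseteq> A'" "independent E I'" "card A' \<le> (d + 1) * card I'"
      using less.hyps[OF smaller fin' deg'] by blast
    have "x \<notin> I'" using I'(1) by (auto simp: A'_def)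
    have "card A \<le> card (A' \<union> insert x (nbr E x \<inter> A))"
      using less.prems(1) by (intro card_mono) (auto simp: A'_def)
    also have "\<dots> \<le> card A' + card (insert x (nbr E x \<inter> A))" by (rule card_Un_le)
    also have "\<dots> \<le> card A' + Suc (card (nbr E x \<inter> A))"
      using less.prems(1) by (simp add: card_insert_if)
    also have "\<dots> \<le> card A' + (d + 1)" using less.prems(2) x by auto
    finally have "card A \<le> (d + 1) * Suc (card I')" using I'(3) by simp
    moreover have "card (insert x I') = Suc (card I')"
      using finite_subset[OF I'(1) fin'] \<open>x \<notin> I'\<close> by simp
    moreover have "independent E (insert x I')"
      using I' by (intro independent_insert) (auto simp: A'_def nbr_def)
    ultimately show ?thesis using I'(1) x by (intro exI[of _ "insert x I'"]) (auto simp: A'_def)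
  qed
qed

lemma induced_edges_star:
  assumes "simple_graph V E" "independent E T" "L \<subseteq> nbr E u \<inter> T"
  shows "induced_edges E (insert u L) = (\<lambda>l. {u, l}) ` L"
proof
  show "induced_edges E (insert u L) \<subseteq> (\<lambda>l. {u, l}) ` L"
  proof
    fix e assume e: "e \<in> induced_edges E (insert u L)"
    then obtain a b where ab: "e = {a, b}" "a \<noteq> b" "e \<in> E"
      using simple_graph_edgeE[OF assms(1)] unfolding induced_edges_def by blast
    have "a = u \<or> b = u"
      using assms(2,3) e ab unfolding independent_def induced_edges_def by blast
    then show "e \<in> (\<lambda>l. {u, l}) ` L"
      using e ab unfolding induced_edges_def by (auto simp: insert_commute)
  qed
  show "(\<lambda>l. {u, l}) ` L \<subseteq> induced_edges E (insert u L)"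
    using assms(3) by (auto simp: induced_edges_def nbr_def)
qed

lemma k_edges_from_star:
  assumes "simple_graph V E" "independent E T" "T \<subseteq> V"
    and "k \<le> card (nbr E u \<inter> T)" "k \<ge> 1"
  shows "has_k_edge_induced_subgraph V E k"
proof -
  obtain L where L: "L \<subseteq> nbr E u \<inter> T" "card L = k"
    using obtain_subset_with_card_n[OF assms(4)] by metis
  have "card (induced_edges E (insert u L)) = k"
    using induced_edges_star[OF assms(1,2) L(1)] L(2)
    by (simp add: card_image inj_on_def doubleton_eq_iff)
  moreover have "u \<in> V"
  proof -
    obtain l where "l \<in> L" using L(2) assms(5) by fastforce
    then have "u \<in> nbr E l" using L(1) nbr_sym by fastforce
    then show ?thesis using simple_graph_nbr_subset[OF assms(1)] by blast
  qed
  ultimately show ?thesis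
    using L(1) assms(1,3,5) by (intro has_k_edge_induced_subgraphI) auto
qed

text \<open>A minimal set \<open>U\<close> dominating \<open>T\<close> (every vertex of \<open>T\<close> has a neighbour in \<open>U\<close>) has
  private neighbours: every \<open>u \<in> U\<close> is the unique \<open>U\<close>-neighbour of some \<open>p u \<in> T\<close>,
  since otherwise \<open>U - {u}\<close> would still dominate \<open>T\<close>.\<close>

lemma private_neighbour_dominating_set:
  assumes "finite V" "\<forall>t\<in>T. nbr E t \<inter> V \<noteq> {}"
  obtains U p where "U \<subseteq> V" "\<forall>t\<in>T. nbr E t \<inter> U \<noteq> {}"
    "\<forall>u\<in>U. p u \<in> T \<and> nbr E (p u) \<inter> U = {u}"
proof -
  define dominating where "dominating U \<longleftrightarrow> U \<subseteq> V \<and> (\<forall>t\<in>T. nbr E t \<inter> U \<noteq> {})" for U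
  obtain U where U: "dominating U" and minimal: "\<And>U'. dominating U' \<Longrightarrow> card U \<le> card U'"
    using ex_has_least_nat[of dominating V card] assms(2) unfolding dominating_def by blast
  have "\<exists>t. t \<in> T \<and> nbr E t \<inter> U = {u}" if u: "u \<in> U" for u
  proof -
    have "finite U" using U assms(1) finite_subset unfolding dominating_def by blast
    then have "\<not> dominating (U - {u})"
      using minimal card_Diff1_less[OF _ u] by (meson not_le)
    then obtain t where "t \<in> T" "nbr E t \<inter> (U - {u}) = {}"
      using U unfolding dominating_def by blast
    moreover have "nbr E t \<inter> U \<noteq> {}" using U \<open>t \<in> T\<close> unfolding dominating_def by blast
    ultimately show ?thesis by blast
  qed
  then obtain p where "\<forall>u\<in>U. p u \<in> T \<and> nbr E (p u) \<inter> U = {u}" by metis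
  then show ?thesis using U that unfolding dominating_def by blast
qed

text \<open>If the private neighbours lie in an independent set \<open>T\<close>, then \<open>U\<close> avoids \<open>T\<close>:
  a vertex of \<open>U \<inter> T\<close> would be adjacent to its private neighbour inside \<open>T\<close>.\<close>

lemma private_neighbours_disjoint:
  assumes "simple_graph V E" "independent E T" "\<forall>u\<in>U. p u \<in> T \<and> u \<in> nbr E (p u)"
  shows "U \<inter> T = {}"
proof (rule ccontr)
  assume "U \<inter> T \<noteq> {}"
  then obtain u where u: "u \<in> U" "u \<in> T" by blast
  then have "{p u, u} \<in> E" "p u \<in> T" using assms(3) unfolding nbr_def by blast+
  moreover have "p u \<noteq> u" using \<open>{p u, u} \<in> E\<close> simple_graph_no_loop[OF assms(1)] by force
  ultimately show False using u assms(2) unfolding independent_def by blast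
qed

lemma card_le_by_domination:
  assumes "finite T" "finite U" "\<forall>t\<in>T. nbr E t \<inter> U \<noteq> {}"
    and "\<forall>u\<in>U. card (nbr E u \<inter> T) \<le> b"
  shows "card T \<le> card U * b"
proof -
  have "T \<subseteq> (\<Union>u\<in>U. nbr E u \<inter> T)"
    using assms(3) nbr_sym by fastforce
  then have "card T \<le> card (\<Union>u\<in>U. nbr E u \<inter> T)"
    using assms(1,2) by (intro card_mono) auto
  also have "\<dots> \<le> (\<Sum>u\<in>U. card (nbr E u \<inter> T))" by (rule card_UN_le[OF assms(2)])
  also have "\<dots> \<le> card U * b" using sum_bounded_above[of U _ b] assms(4) by simp
  finally show ?thesis .
qed

lemma card_induced_edges_insert:
  assumes "simple_graph V E" "finite C"
  shows "card (induced_edges E (insert x C)) \<le> card (induced_edges E C) + card C"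
proof -
  have "induced_edges E (insert x C) \<subseteq> induced_edges E C \<union> (\<lambda>c. {x, c}) ` C"
  proof
    fix e assume e: "e \<in> induced_edges E (insert x C)"
    then obtain a b where "e = {a, b}" "a \<noteq> b"
      using simple_graph_edgeE[OF assms(1)] unfolding induced_edges_def by blast
    then show "e \<in> induced_edges E C \<union> (\<lambda>c. {x, c}) ` C"
      using e unfolding induced_edges_def by (cases "x \<in> e") (auto simp: insert_commute)
  qed
  then have "card (induced_edges E (insert x C)) \<le> card (induced_edges E C \<union> (\<lambda>c. {x, c}) ` C)"
    using simple_graph_finite_edges[OF assms(1)] assms(2)
    by (intro card_mono) (auto simp: induced_edges_def)
  also have "\<dots> \<le> card (induced_edges E C) + card ((\<lambda>c. {x, c}) ` C)" by (rule card_Un_le)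
  also have "\<dots> \<le> card (induced_edges E C) + card C" using card_image_le[OF assms(2)] by simp
  finally show ?thesis .
qed

text \<open>Take \<open>C\<close> of maximal size among subsets inducing at most \<open>k\<close>
  edges; either \<open>C = U\<close>, or adding a vertex overshoots \<open>k\<close> by the previous lemma.\<close>

lemma edge_threshold_subset:
  assumes "simple_graph V E" "finite U" "k \<le> card U"
  shows "\<exists>C\<subseteq>U. card (induced_edges E C) \<le> k \<and> k \<le> card (induced_edges E C) + card C"
proof -
  define sparse where "sparse C \<longleftrightarrow> C \<subseteq> U \<and> card (induced_edges E C) \<le> k" for C
  have "sparse {}"
    using simple_graph_induced_edges_empty[OF assms(1)] by (simp add: sparse_def)
  moreover have "\<forall>C. sparse C \<longrightarrow> card C < Suc (card U)"
    using assms(2) by (auto simp: sparse_def card_mono less_Suc_eq_le)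
  ultimately obtain C where C: "sparse C" and maximal: "\<And>C'. sparse C' \<Longrightarrow> card C' \<le> card C"
    using ex_has_greatest_nat[of sparse "{}" card "Suc (card U)"] by blast
  have CU: "C \<subseteq> U" and finC: "finite C"
    using C assms(2) finite_subset unfolding sparse_def by auto
  have "k \<le> card (induced_edges E C) + card C"
  proof (cases "C = U")
    case True
    then show ?thesis using assms(3) by simp
  next
    case False
    then obtain x where x: "x \<in> U" "x \<notin> C" using CU by blast
    then have "\<not> sparse (insert x C)"
      using maximal[of "insert x C"] finC by auto
    then have "k < card (induced_edges E (insert x C))"
      using x CU unfolding sparse_def by auto
    then show ?thesis using card_induced_edges_insert[OF assms(1) finC, of x] by linarith
  qed
  then show ?thesis using C unfolding sparse_def by blast
qed

lemma induced_edges_pendant: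
  assumes "simple_graph V E" "independent E T" "C' \<subseteq> C"
    and privacy: "\<forall>c\<in>C'. p c \<in> T \<and> nbr E (p c) \<inter> C = {c}"
  shows "induced_edges E (C \<union> p ` C') = induced_edges E C \<union> (\<lambda>c. {c, p c}) ` C'"
proof
  have pendant: "x = c" if "c \<in> C'" "x \<in> C" "{p c, x} \<in> E" for c x
    using privacy that unfolding nbr_def by blast
  show "induced_edges E (C \<union> p ` C') \<subseteq> induced_edges E C \<union> (\<lambda>c. {c, p c}) ` C'"
  proof
    fix e assume e: "e \<in> induced_edges E (C \<union> p ` C')"
    then obtain a b where ab: "e = {a, b}" "a \<noteq> b" "e \<in> E"
      using simple_graph_edgeE[OF assms(1)] unfolding induced_edges_def by blast
    have a: "a \<in> C \<union> p ` C'" and b: "b \<in> C \<union> p ` C'"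
      using e ab(1) unfolding induced_edges_def by auto
    show "e \<in> induced_edges E C \<union> (\<lambda>c. {c, p c}) ` C'"
    proof (cases "a \<in> C"; cases "b \<in> C")
      assume "a \<in> C" "b \<in> C"
      then show ?thesis using ab unfolding induced_edges_def by auto
    next
      assume "a \<in> C" "b \<notin> C"
      then obtain c where "c \<in> C'" "b = p c" using b by auto
      then show ?thesis using pendant[of c a] ab \<open>a \<in> C\<close> by (auto simp: insert_commute)
    next
      assume "a \<notin> C" "b \<in> C"
      then obtain c where "c \<in> C'" "a = p c" using a by auto
      then show ?thesis using pendant[of c b] ab \<open>b \<in> C\<close> by (auto simp: insert_commute)
    next
      assume "a \<notin> C" "b \<notin> C"
      then have "a \<in> T" "b \<in> T" using a b privacy by auto
      then show ?thesis using assms(2) ab unfolding independent_def by blast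
    qed
  qed
  show "induced_edges E C \<union> (\<lambda>c. {c, p c}) ` C' \<subseteq> induced_edges E (C \<union> p ` C')"
    using privacy assms(3) by (auto simp: induced_edges_def nbr_def insert_commute)
qed

lemma card_induced_edges_pendant:
  assumes "simple_graph V E" "independent E T" "C \<inter> T = {}" "C' \<subseteq> C" "finite C'"
    and privacy: "\<forall>c\<in>C'. p c \<in> T \<and> nbr E (p c) \<inter> C = {c}"
  shows "card (induced_edges E (C \<union> p ` C')) = card (induced_edges E C) + card C'"
proof -
  have "{c, p c} \<notin> induced_edges E C" if "c \<in> C'" for c
    using that privacy assms(3) unfolding induced_edges_def by blast
  then have "induced_edges E C \<inter> (\<lambda>c. {c, p c}) ` C' = {}" by blast
  moreover have "inj_on (\<lambda>c. {c, p c}) C'"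
  proof (rule inj_onI)
    fix c c' assume c: "c \<in> C'" "c' \<in> C'" "{c, p c} = {c', p c'}"
    have "c \<noteq> p c'" using c(1,2) assms(3,4) privacy by blast
    then show "c = c'" using c(3) by (auto simp: doubleton_eq_iff)
  qed
  moreover have "finite (induced_edges E C)"
    using simple_graph_finite_edges[OF assms(1)] by (simp add: induced_edges_def)
  ultimately show ?thesis
    unfolding induced_edges_pendant[OF assms(1,2,4) privacy]
    using assms(5) by (simp add: card_Un_disjoint card_image)
qed

text \<open>A minimal dominating
  set \<open>U\<close> of \<open>T\<close> has at least \<open>k\<close> vertices; a subset \<open>C\<close> inducing slightly fewer than \<open>k\<close> edges
  is topped up to exactly \<open>k\<close> edges with pendant edges to private neighbours.\<close>

lemma k_edges_from_sparse_independent_set: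
  assumes G: "simple_graph V E" and indep: "independent E T" "T \<subseteq> V"
    and nbrs: "\<forall>t\<in>T. nbr E t \<noteq> {}"
    and sparse: "\<forall>u. card (nbr E u \<inter> T) \<le> k - 1"
    and big: "(k - 1)^2 < card T" and "k \<ge> 1"
  shows "has_k_edge_induced_subgraph V E k"
proof -
  have finV: "finite V" using G by (simp add: simple_graph_def)
  have "\<forall>t\<in>T. nbr E t \<inter> V \<noteq> {}"
    using nbrs simple_graph_nbr_subset[OF G] by (simp add: Int_absorb2)
  then obtain U p where UV: "U \<subseteq> V" and dom: "\<forall>t\<in>T. nbr E t \<inter> U \<noteq> {}"
    and p: "\<forall>u\<in>U. p u \<in> T \<and> nbr E (p u) \<inter> U = {u}"
    using private_neighbour_dominating_set[OF finV] by blast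
  have finU: "finite U" using finite_subset[OF UV finV] .
  have finT: "finite T" using finite_subset[OF indep(2) finV] .
  have UT: "U \<inter> T = {}"
    using private_neighbours_disjoint[OF G indep(1), of U p] p by blast
  have "card T \<le> card U * (k - 1)"
    using card_le_by_domination[OF finT finU dom] sparse by blast
  then have "(k - 1) * (k - 1) < card U * (k - 1)" using big unfolding power2_eq_square by linarith
  then have "k - 1 < card U" by simp
  then have "k \<le> card U" by linarith
  then obtain C where CU: "C \<subseteq> U"
    and thresh: "card (induced_edges E C) \<le> k" "k \<le> card (induced_edges E C) + card C"
    using edge_threshold_subset[OF G finU] by blast
  obtain C' where C': "C' \<subseteq> C" "card C' = k - card (induced_edges E C)"
  proof (rule obtain_subset_with_card_n)
    show "k - card (induced_edges E C) \<le> card C" using thresh(2) by linarith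
  qed
  have CU': "C' \<subseteq> U" using C'(1) CU by (rule order_trans)
  have pC: "\<forall>c\<in>C'. p c \<in> T \<and> nbr E (p c) \<inter> C = {c}"
  proof
    fix c assume c: "c \<in> C'"
    then have "nbr E (p c) \<inter> U = {c}" "c \<in> C" using p CU' C'(1) by auto
    then show "p c \<in> T \<and> nbr E (p c) \<inter> C = {c}" using p c CU' CU by blast
  qed
  have "card (induced_edges E (C \<union> p ` C')) = card (induced_edges E C) + card C'"
    using card_induced_edges_pendant[OF G indep(1) _ C'(1) finite_subset[OF CU' finU] pC] CU UT
    by blast
  then have card_k: "card (induced_edges E (C \<union> p ` C')) = k" using C'(2) thresh(1) by simp
  have "C \<union> p ` C' \<subseteq> V" using CU UV CU' p indep(2) by blast
  from has_k_edge_induced_subgraphI[OF G this card_k \<open>k \<ge> 1\<close>] show ?thesis .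
qed

lemma k_edges_from_independent_set:
  assumes "simple_graph V E" "independent E T" "T \<subseteq> V"
    and "\<forall>t\<in>T. nbr E t \<noteq> {}" and "(k - 1)^2 < card T" and "k \<ge> 1"
  shows "has_k_edge_induced_subgraph V E k"
proof (cases "\<exists>u. k \<le> card (nbr E u \<inter> T)")
  case True
  then obtain u where "k \<le> card (nbr E u \<inter> T)" by blast
  then show ?thesis by (rule k_edges_from_star[OF assms(1-3) _ assms(6)])
next
  case False
  have "\<forall>u. card (nbr E u \<inter> T) \<le> k - 1"
  proof
    fix u
    have "card (nbr E u \<inter> T) < k" using False by (simp add: not_le)
    then show "card (nbr E u \<inter> T) \<le> k - 1" by linarith
  qed
  then show ?thesis by (rule k_edges_from_sparse_independent_set[OF assms(1-4) _ assms(5,6)])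
qed

theorem lemma3p12:
  fixes V :: "'a set" and E :: "'a set set" and d k :: nat
  assumes "simple_graph V E" and "d \<ge> 1" and "k \<ge> 1"
    and "card (deg_range_verts V E d) > (d + 1) * (k - 1)^2"
  shows "has_k_edge_induced_subgraph V E k"
proof -
  define W where "W = deg_range_verts V E d"
  have WV: "W \<subseteq> V" and finW: "finite W"
    using assms(1) finite_subset by (auto simp: W_def deg_range_verts_def simple_graph_def)
  have "\<forall>x\<in>W. card (nbr E x \<inter> W) \<le> d"
    using card_nbr_inter_le_degree[OF assms(1)] le_trans by (fastforce simp: W_def deg_range_verts_def)
  then obtain T where T: "T \<subseteq> W" "independent E T" "card W \<le> (d + 1) * card T"
    using greedy_independent_set[OF finW] by blast
  have "(d + 1) * (k - 1)^2 < (d + 1) * card T"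
    using assms(4) T(3) unfolding W_def by linarith
  then have "(k - 1)^2 < card T" by (rule mult_less_cancel1[THEN iffD1, THEN conjunct2])
  moreover have "\<forall>t\<in>T. nbr E t \<noteq> {}"
    using T(1) simple_graph_nbr_nonempty[OF assms(1)] by (auto simp: W_def deg_range_verts_def)
  ultimately show ?thesis
    using k_edges_from_independent_set[OF assms(1) T(2)] T(1) WV assms(3) by blast
qed

end
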